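(* Let $I$ be a real interval of length $H \geq 1$. For every polynomial $P(T) = a_0 T^2 + a_1 T + a_2 \in \mathbb{Z}[T]$ with $a_0 \neq 0$ and every integer $k$, the number of integer points $(x,y) \in (I \times I) \cap \mathbb{Z}^2$ satisfying $P(x) + P(y) = k$ is at most $\sup_{1 \leq n \leq 144 H^4} r(n)$.
   Context: For an integer $n \geq 0$, $r(n)$ denotes the number of pairs of integers $(x,y)$ with $x^2 + y^2 = n$. *)

theory Defs
  imports Complex_Main
begin

definition r :: "nat \<Rightarrow> nat" where
  "r n = card {(x::int, y::int). x^2 + y^2 = int n}"

end

theory Submission
  imports Defs
begin

(* Let P(T) = a0 T^2 + a1 T + a2 with a0 \<noteq> 0 and let S be the set of integer points
   (x,y) with both coordinates in a set A of integers of diameter at most H and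
   P(x) + P(y) = k.  Two cases arise.
   - All points of S have the same coordinate sum x + y.  Then the level-set equation
     forces (x,y) to be (x1,y1) or (y1,x1) for any fixed point (x1,y1) of S, so
     |S| \<le> 2 \<le> r(1).
   - S contains points (x1,y1), (x2,y2) with D = (x1+y1) - (x2+y2) \<noteq> 0.  Then the
     injective affine map (x,y) \<mapsto> (2D(x-x1)+M, 2D(y-x1)+M), with an integer M built
     from the two points, sends S into the lattice points of one circle u^2+v^2 = n;
     the diameter bound gives 1 \<le> n \<le> 144 H^4, so |S| \<le> r(n). *)

definition quad :: "int \<Rightarrow> int \<Rightarrow> int \<Rightarrow> int \<Rightarrow> int" where
  "quad a0 a1 a2 t = a0 * t^2 + a1 * t + a2"

lemma finite_circle_points: "finite {(x::int, y::int). x^2 + y^2 = int n}"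
proof -
  have abs_le_sq: "\<bar>z\<bar> \<le> z^2" for z :: int
  proof (cases "z = 0")
    case False
    then have "\<bar>z\<bar> * 1 \<le> \<bar>z\<bar> * \<bar>z\<bar>" by (intro mult_left_mono) auto
    then show ?thesis by (simp add: power2_eq_square abs_mult_self_eq)
  qed simp
  have "{(x::int, y::int). x^2 + y^2 = int n} \<subseteq> {-int n..int n} \<times> {-int n..int n}"
  proof clarsimp
    fix x y :: int assume "x^2 + y^2 = int n"
    moreover have "\<bar>x\<bar> \<le> x^2" "\<bar>y\<bar> \<le> y^2" "0 \<le> x^2" "0 \<le> y^2" by (simp_all add: abs_le_sq)
    ultimately show "- int n \<le> x \<and> x \<le> int n \<and> - int n \<le> y \<and> y \<le> int n" by linarith
  qed
  then show ?thesis by (rule finite_subset) auto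
qed

lemma card_le_r_of_inj:
  assumes "inj_on f S" and "\<And>p. p \<in> S \<Longrightarrow> fst (f p)^2 + snd (f p)^2 = int n"
  shows "card S \<le> r n"
proof -
  have "f ` S \<subseteq> {(x, y). x^2 + y^2 = int n}"
  proof (rule image_subsetI)
    fix p assume "p \<in> S"
    then show "f p \<in> {(x, y). x^2 + y^2 = int n}" using assms(2) by (cases "f p") force
  qed
  then show ?thesis unfolding r_def by (rule card_inj_on_le[OF assms(1) _ finite_circle_points])
qed

lemma two_le_r_one: "2 \<le> r 1"
proof -
  have "{(1::int,0::int),(0,1)} \<subseteq> {(x::int, y::int). x^2 + y^2 = int 1}" by auto
  from card_mono[OF finite_circle_points this] show ?thesis by (simp add: r_def)
qed

text \<open>On a line \<open>x + y = s\<close> the level set \<open>P x + P y = k\<close> contains at most the two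
  points \<open>(x1,y1)\<close>, \<open>(y1,x1)\<close>, because \<open>x^2 + y^2\<close> is then determined.\<close>
lemma level_set_on_line:
  assumes "a0 \<noteq> 0"
    and "quad a0 a1 a2 x + quad a0 a1 a2 y = quad a0 a1 a2 x1 + quad a0 a1 a2 y1"
    and sum: "x + y = x1 + y1"
  shows "(x, y) = (x1, y1) \<or> (x, y) = (y1, x1)"
proof -
  have "a0 * (x^2 + y^2 - x1^2 - y1^2) + a1 * (x + y - x1 - y1) = 0"
    using assms(2) by (simp add: quad_def algebra_simps)
  then have "x^2 + y^2 = x1^2 + y1^2" using sum \<open>a0 \<noteq> 0\<close> by simp
  moreover have y: "y = x1 + y1 - x" using sum by simp
  ultimately have "(x - x1) * (x - y1) = 0" by (simp add: algebra_simps power2_eq_square)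
  then show ?thesis using y by auto
qed

text \<open>Subtracting the level-set equations at the two given points
  yields \<open>a0 M = (2 a0 x1 + a1) D\<close>, which identifies \<open>-M/(2D)\<close> with the centre of the
  real circle in coordinates shifted by \<open>x1\<close>.\<close>
lemma level_set_on_circle:
  fixes a0 a1 a2 k x1 y1 x2 y2 x y :: int
  defines "F \<equiv> \<lambda>x y. quad a0 a1 a2 x + quad a0 a1 a2 y"
  defines "D \<equiv> (x1 + y1) - (x2 + y2)"
    and "M \<equiv> (x2 - x1)^2 + (y2 - x1)^2 - (y1 - x1)^2"
  assumes "a0 \<noteq> 0" "F x1 y1 = k" "F x2 y2 = k" "F x y = k"
  shows "(2*D*(x - x1) + M)^2 + (2*D*(y - x1) + M)^2 = M^2 + (2*D*(y1 - x1) + M)^2"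
proof -
  define b where "b = 2*a0*x1 + a1"
  define Q where "Q = (\<lambda>x y. (2*D*(x - x1) + M)^2 + (2*D*(y - x1) + M)^2)"
  have centre: "a0 * M = b * D"
  proof -
    have "F x2 y2 - F x1 y1 = 0" using assms by simp
    then show ?thesis unfolding F_def quad_def M_def b_def D_def
      by (simp add: algebra_simps power2_eq_square)
  qed
  have "a0 * (Q x y - Q x1 y1)
      = 4*D*(D*a0*((x-x1)^2 + (y-x1)^2 - (y1-x1)^2) + (a0*M)*((x-x1) + (y-x1) - (y1-x1)))"
    unfolding Q_def by (simp add: algebra_simps power2_eq_square)
  also have "\<dots> = 4*D*(D*a0*((x-x1)^2 + (y-x1)^2 - (y1-x1)^2) + (b*D)*((x-x1) + (y-x1) - (y1-x1)))"
    using centre by simp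
  also have "\<dots> = 4*D*D*(F x y - F x1 y1)"
    unfolding F_def quad_def b_def by (simp add: algebra_simps power2_eq_square)
  also have "\<dots> = 0" using assms by simp
  finally have "Q x y = Q x1 y1" using \<open>a0 \<noteq> 0\<close> by simp
  then show ?thesis by (simp add: Q_def)
qed

lemma radius_bound:
  fixes m t H :: real
  assumes "\<bar>m\<bar> \<le> 2*H^2" and "\<bar>t\<bar> \<le> 4*H^2"
  shows "m^2 + (t + m)^2 \<le> 144 * H^4"
proof -
  have "\<bar>m\<bar> \<le> \<bar>2*H^2\<bar>" and "\<bar>t + m\<bar> \<le> \<bar>6*H^2\<bar>" using assms by auto
  then have "m^2 \<le> (2*H^2)^2" and "(t + m)^2 \<le> (6*H^2)^2" by (simp_all only: abs_le_square_iff)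
  moreover have "0 \<le> H^4" by simp
  ultimately show ?thesis by (simp add: power2_eq_square power4_eq_xxxx)
qed

lemma rescaled_radius_bound:
  fixes H :: real and x1 y1 x2 y2 :: int
  defines "D \<equiv> (x1 + y1) - (x2 + y2)"
    and "M \<equiv> (x2 - x1)^2 + (y2 - x1)^2 - (y1 - x1)^2"
  assumes diam: "\<And>u w. u \<in> A \<Longrightarrow> w \<in> A \<Longrightarrow> \<bar>real_of_int (u - w)\<bar> \<le> H"
    and coords: "x1 \<in> A" "y1 \<in> A" "x2 \<in> A" "y2 \<in> A"
  shows "real_of_int (M^2 + (2*D*(y1 - x1) + M)^2) \<le> 144 * H^4"
proof -
  have sq_bound: "0 \<le> real_of_int ((u - x1)^2) \<and> real_of_int ((u - x1)^2) \<le> H^2"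
    if "u \<in> A" for u
  proof -
    have "\<bar>real_of_int (u - x1)\<bar> \<le> \<bar>H\<bar>" using diam[OF that coords(1)] by linarith
    then show ?thesis by (simp only: of_int_power abs_le_square_iff zero_le_power2 simp_thms)
  qed
  have M_bound: "\<bar>real_of_int M\<bar> \<le> 2*H^2"
    using sq_bound[OF coords(3)] sq_bound[OF coords(4)] sq_bound[OF coords(2)]
    unfolding M_def of_int_add of_int_diff by linarith
  have shift_bound: "\<bar>real_of_int (2*D*(y1 - x1))\<bar> \<le> 4*H^2"
  proof -
    have "\<bar>real_of_int D\<bar> \<le> 2*H"
      using diam[OF coords(1,3)] diam[OF coords(2,4)] unfolding D_def by simp
    moreover have "\<bar>real_of_int (y1 - x1)\<bar> \<le> H" using diam[OF coords(2,1)] .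
    ultimately have "2 * \<bar>real_of_int D\<bar> * \<bar>real_of_int (y1 - x1)\<bar> \<le> 2 * (2*H) * H"
      by (intro mult_mono) auto
    then show ?thesis by (simp add: abs_mult power2_eq_square)
  qed
  show ?thesis
    unfolding of_int_add of_int_power by (rule radius_bound[OF M_bound shift_bound])
qed

definition level_set :: "int set \<Rightarrow> int \<Rightarrow> int \<Rightarrow> int \<Rightarrow> int \<Rightarrow> (int \<times> int) set" where
  "level_set A a0 a1 a2 k =
     {(x, y). x \<in> A \<and> y \<in> A \<and> quad a0 a1 a2 x + quad a0 a1 a2 y = k}"

lemma card_level_set_constant_sum:
  assumes "a0 \<noteq> 0"
    and same_sum: "\<And>x y x' y'. (x, y) \<in> level_set A a0 a1 a2 k \<Longrightarrow>
                     (x', y') \<in> level_set A a0 a1 a2 k \<Longrightarrow> x + y = x' + y'"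
  shows "card (level_set A a0 a1 a2 k) \<le> 2"
proof (cases "level_set A a0 a1 a2 k = {}")
  case False
  then obtain x1 y1 where p: "(x1, y1) \<in> level_set A a0 a1 a2 k" by auto
  have "level_set A a0 a1 a2 k \<subseteq> {(x1, y1), (y1, x1)}"
  proof
    fix z assume "z \<in> level_set A a0 a1 a2 k"
    then obtain x y where z: "z = (x, y)" and q: "(x, y) \<in> level_set A a0 a1 a2 k"
      by (cases z) auto
    have "quad a0 a1 a2 x + quad a0 a1 a2 y = quad a0 a1 a2 x1 + quad a0 a1 a2 y1"
      using p q by (simp add: level_set_def)
    from level_set_on_line[OF \<open>a0 \<noteq> 0\<close> this same_sum[OF q p]]
    show "z \<in> {(x1, y1), (y1, x1)}" by (auto simp: z)
  qed
  then have "card (level_set A a0 a1 a2 k) \<le> card {(x1, y1), (y1, x1)}"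
    by (intro card_mono) auto
  also have "\<dots> \<le> 2" by (rule card_insert_le_m1) simp_all
  finally show ?thesis .
qed simp

lemma card_level_set_on_circle:
  fixes H :: real
  assumes "a0 \<noteq> 0"
    and diam: "\<And>u w. u \<in> A \<Longrightarrow> w \<in> A \<Longrightarrow> \<bar>real_of_int (u - w)\<bar> \<le> H"
    and p: "(x1, y1) \<in> level_set A a0 a1 a2 k" and q: "(x2, y2) \<in> level_set A a0 a1 a2 k"
    and distinct_sums: "x1 + y1 \<noteq> x2 + y2"
  shows "\<exists>n. 1 \<le> n \<and> real n \<le> 144 * H^4 \<and> card (level_set A a0 a1 a2 k) \<le> r n"
proof -
  define D where "D = (x1 + y1) - (x2 + y2)"
  define M where "M = (x2 - x1)^2 + (y2 - x1)^2 - (y1 - x1)^2"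
  define f where "f = (\<lambda>(x::int, y::int). (2*D*(x - x1) + M, 2*D*(y - x1) + M))"
  define n where "n = nat (M^2 + (2*D*(y1 - x1) + M)^2)"
  have "D \<noteq> 0" using distinct_sums by (simp add: D_def)
  then have inj: "inj_on f UNIV" by (auto simp: f_def inj_on_def)
  have on_circle: "fst (f z)^2 + snd (f z)^2 = int n" if "z \<in> level_set A a0 a1 a2 k" for z
  proof -
    obtain x y where z: "z = (x, y)" by (cases z)
    have "quad a0 a1 a2 x + quad a0 a1 a2 y = k" "quad a0 a1 a2 x1 + quad a0 a1 a2 y1 = k"
      "quad a0 a1 a2 x2 + quad a0 a1 a2 y2 = k"
      using that p q by (auto simp: z level_set_def)
    from level_set_on_circle[OF \<open>a0 \<noteq> 0\<close> this(2,3,1)]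
    show ?thesis by (simp add: z f_def n_def D_def M_def)
  qed
  have "n \<noteq> 0"
  proof
    assume "n = 0"
    then have "fst (f z) = 0 \<and> snd (f z) = 0" if "z \<in> level_set A a0 a1 a2 k" for z
      using on_circle[OF that] by (simp only: of_nat_0 sum_power2_eq_zero_iff)
    then have "f (x1, y1) = f (x2, y2)" using p q by (simp add: prod_eq_iff)
    then have "(x1, y1) = (x2, y2)" by (rule injD[OF inj])
    then show False using distinct_sums by simp
  qed
  have "x1 \<in> A" "y1 \<in> A" "x2 \<in> A" "y2 \<in> A" using p q by (auto simp: level_set_def)
  from rescaled_radius_bound[OF diam this] have "real n \<le> 144 * H^4"
    by (simp add: n_def D_def M_def)
  moreover have "card (level_set A a0 a1 a2 k) \<le> r n"
    by (rule card_le_r_of_inj[OF inj_on_subset[OF inj] on_circle]) auto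
  ultimately show ?thesis using \<open>n \<noteq> 0\<close> by (intro exI[of _ n]) simp
qed

lemma card_level_set_bound:
  fixes H :: real
  assumes "1 \<le> H" and "a0 \<noteq> 0"
    and diam: "\<And>u w. u \<in> A \<Longrightarrow> w \<in> A \<Longrightarrow> \<bar>real_of_int (u - w)\<bar> \<le> H"
  shows "\<exists>n. 1 \<le> n \<and> real n \<le> 144 * H^4 \<and> card (level_set A a0 a1 a2 k) \<le> r n"
proof (cases "\<exists>x1 y1 x2 y2. (x1, y1) \<in> level_set A a0 a1 a2 k \<and>
                (x2, y2) \<in> level_set A a0 a1 a2 k \<and> x1 + y1 \<noteq> x2 + y2")
  case True
  then obtain x1 y1 x2 y2 where "(x1, y1) \<in> level_set A a0 a1 a2 k"
    "(x2, y2) \<in> level_set A a0 a1 a2 k" "x1 + y1 \<noteq> x2 + y2" by blast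
  from card_level_set_on_circle[OF \<open>a0 \<noteq> 0\<close> diam this] show ?thesis .
next
  case False
  then have "card (level_set A a0 a1 a2 k) \<le> 2"
    by (intro card_level_set_constant_sum[OF \<open>a0 \<noteq> 0\<close>]) blast
  then have "card (level_set A a0 a1 a2 k) \<le> r 1" using two_le_r_one by linarith
  moreover have "1 \<le> H^4" using \<open>1 \<le> H\<close> by (rule one_le_power)
  then have "real (1::nat) \<le> 144 * H^4" by simp
  ultimately show ?thesis by blast
qed

lemma r_le_Max:
  fixes B :: real
  assumes "1 \<le> n" and "real n \<le> B"
  shows "r n \<le> Max {r m | m. 1 \<le> m \<and> real m \<le> B}"
proof (rule Max_ge)
  have "{r m | m. 1 \<le> m \<and> real m \<le> B} \<subseteq> r ` {..nat \<lceil>B\<rceil>}"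
  proof clarify
    fix m :: nat assume "1 \<le> m" "real m \<le> B"
    then have "m \<le> nat \<lceil>B\<rceil>" by linarith
    then show "r m \<in> r ` {..nat \<lceil>B\<rceil>}" by simp
  qed
  then show "finite {r m | m. 1 \<le> m \<and> real m \<le> B}" by (rule finite_subset) simp
  show "r n \<in> {r m | m. 1 \<le> m \<and> real m \<le> B}" using assms by blast
qed

theorem corollary2:
  fixes I :: "real set" and a H :: real and a0 a1 a2 k :: int
  assumes "H \<ge> 1"
    and "{a<..<a+H} \<subseteq> I" and "I \<subseteq> {a..a+H}"
    and "a0 \<noteq> 0"
  shows "card {(x::int, y::int). real_of_int x \<in> I \<and> real_of_int y \<in> I \<and>
            (a0*x^2 + a1*x + a2) + (a0*y^2 + a1*y + a2) = k}
         \<le> Max {r n | n. 1 \<le> n \<and> real n \<le> 144 * H^4}"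
proof -
  define A where "A = {u :: int. real_of_int u \<in> I}"
  have "\<bar>real_of_int (u - w)\<bar> \<le> H" if "u \<in> A" "w \<in> A" for u w
  proof -
    have "real_of_int u \<in> {a..a+H}" "real_of_int w \<in> {a..a+H}"
      using that \<open>I \<subseteq> {a..a+H}\<close> by (auto simp: A_def)
    then show ?thesis by (auto simp: abs_le_iff)
  qed
  then obtain n where "1 \<le> n" "real n \<le> 144 * H^4"
    and card_bound: "card (level_set A a0 a1 a2 k) \<le> r n"
    using card_level_set_bound[OF \<open>H \<ge> 1\<close> \<open>a0 \<noteq> 0\<close>] by blast
  have "{(x::int, y::int). real_of_int x \<in> I \<and> real_of_int y \<in> I \<and>
            (a0*x^2 + a1*x + a2) + (a0*y^2 + a1*y + a2) = k} = level_set A a0 a1 a2 k"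
    by (simp add: level_set_def quad_def A_def)
  then show ?thesis using order_trans[OF card_bound r_le_Max[OF \<open>1 \<le> n\<close> \<open>real n \<le> 144 * H^4\<close>]]
    by simp
qed

end
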